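(* Let $G$ be a connected simple cubic graph such that the Petersen graph $P$ admits a $G$-coloring. Then $G$ is isomorphic to $P$.
   Context: A simple graph has no loops and no parallel edges; a cubic graph is $3$-regular. For a graph $X$ and vertex $x$, $\partial_X(x)$ denotes the set of edges of $X$ incident to $x$. For cubic graphs $G, H$ (loopless, parallel edges allowed), an $H$-coloring of $G$ is a map $f: E(G)\to E(H)$ such that for every vertex $x$ of $G$ there is a vertex $y$ of $H$ with $f(\partial_G(x))=\partial_H(y)$. $P$ denotes the Petersen graph. *)

theory Defs
  imports Main
begin

text \<open>Parallel edges are allowed (ends need not be injective).\<close>

definition mgraph :: "'v set \<Rightarrow> 'e set \<Rightarrow> ('e \<Rightarrow> 'v set) \<Rightarrow> bool" where
  "mgraph V E ends \<longleftrightarrow> finite V \<and> finite E \<and>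
     (\<forall>e\<in>E. ends e \<subseteq> V \<and> card (ends e) = 2)"

definition incid :: "'e set \<Rightarrow> ('e \<Rightarrow> 'v set) \<Rightarrow> 'v \<Rightarrow> 'e set" where
  "incid E ends x = {e\<in>E. x \<in> ends e}"

definition cubic :: "'v set \<Rightarrow> 'e set \<Rightarrow> ('e \<Rightarrow> 'v set) \<Rightarrow> bool" where
  "cubic V E ends \<longleftrightarrow> mgraph V E ends \<and> (\<forall>x\<in>V. card (incid E ends x) = 3)"

text \<open>Simple: no parallel edges (loops are excluded already).\<close>
definition simple :: "'v set \<Rightarrow> 'e set \<Rightarrow> ('e \<Rightarrow> 'v set) \<Rightarrow> bool" where
  "simple V E ends \<longleftrightarrow> mgraph V E ends \<and> inj_on ends E"

definition adj_rel :: "'e set \<Rightarrow> ('e \<Rightarrow> 'v set) \<Rightarrow> ('v \<times> 'v) set" where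
  "adj_rel E ends = {(u, w). \<exists>e\<in>E. ends e = {u, w}}"

definition connected_graph :: "'v set \<Rightarrow> 'e set \<Rightarrow> ('e \<Rightarrow> 'v set) \<Rightarrow> bool" where
  "connected_graph V E ends \<longleftrightarrow> (\<forall>x\<in>V. \<forall>y\<in>V. (x, y) \<in> (adj_rel E ends)\<^sup>*)"

definition H_coloring ::
  "'v set \<Rightarrow> 'e set \<Rightarrow> ('e \<Rightarrow> 'v set) \<Rightarrow> 'w set \<Rightarrow> 'd set \<Rightarrow> ('d \<Rightarrow> 'w set) \<Rightarrow> ('e \<Rightarrow> 'd) \<Rightarrow> bool"
  where
  "H_coloring VG EG endsG VH EH endsH f \<longleftrightarrow>
     (\<forall>e\<in>EG. f e \<in> EH) \<and>
     (\<forall>x\<in>VG. \<exists>y\<in>VH. f ` incid EG endsG x = incid EH endsH y)"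

definition graph_iso ::
  "'v set \<Rightarrow> 'e set \<Rightarrow> ('e \<Rightarrow> 'v set) \<Rightarrow> 'w set \<Rightarrow> 'd set \<Rightarrow> ('d \<Rightarrow> 'w set) \<Rightarrow> bool"
  where
  "graph_iso V1 E1 ends1 V2 E2 ends2 \<longleftrightarrow>
     (\<exists>\<phi> \<psi>. bij_betw \<phi> V1 V2 \<and> bij_betw \<psi> E1 E2 \<and>
        (\<forall>e\<in>E1. ends2 (\<psi> e) = \<phi> ` ends1 e))"

text \<open>The Petersen graph (Kneser graph K(5,2)): vertices are the 2-subsets of {0,..,4},
  two vertices adjacent iff disjoint; an edge is the set of its two endpoints.\<close>
definition petersen_V :: "nat set set" where
  "petersen_V = {S. S \<subseteq> {0..<5} \<and> card S = 2}"

definition petersen_E :: "nat set set set" where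
  "petersen_E = {{a, b} | a b. a \<in> petersen_V \<and> b \<in> petersen_V \<and> a \<inter> b = {}}"

definition petersen_ends :: "nat set set \<Rightarrow> nat set set" where
  "petersen_ends e = e"

end

theory Submission
  imports Defs
begin

text \<open>
  A \<open>G\<close>-colouring \<open>f\<close> of the Petersen graph \<open>P\<close> comes with a vertex map \<open>g\<close> satisfying
  \<open>f(\<partial>v) = \<partial>(g v)\<close>; as both graphs are cubic, \<open>f\<close> is injective on every star.
  Since \<open>G\<close> is simple, two of its vertices share at most one edge, and an edge has only two
  ends. Propagated around the ten stars of \<open>P\<close>, these local constraints force \<open>g\<close> and \<open>f\<close> to
  be injective; this is a finite check on a fixed labelling of \<open>P\<close>. Then \<open>f\<close> maps every edge
  \<open>uv\<close> of \<open>P\<close> to the edge joining \<open>g u\<close> and \<open>g v\<close>, so the image of \<open>g\<close> is closed under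
  adjacency; by connectivity \<open>g\<close> and \<open>f\<close> are onto, and together they form an isomorphism.
\<close>

lemma card_2_eq_doubleton: "card A = 2 \<Longrightarrow> x \<in> A \<Longrightarrow> y \<in> A \<Longrightarrow> x \<noteq> y \<Longrightarrow> A = {x, y}"
  by (auto simp: card_2_iff)

lemma graph_iso_inverse:
  assumes "mgraph V1 E1 ends1" and \<phi>: "bij_betw \<phi> V1 V2" and \<psi>: "bij_betw \<psi> E1 E2"
    and ends: "\<forall>e\<in>E1. ends2 (\<psi> e) = \<phi> ` ends1 e"
  shows "graph_iso V2 E2 ends2 V1 E1 ends1"
  unfolding graph_iso_def
proof (intro exI conjI ballI)
  show "bij_betw (inv_into V1 \<phi>) V2 V1" "bij_betw (inv_into E1 \<psi>) E2 E1"
    using \<phi> \<psi> by (simp_all add: bij_betw_inv_into)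
  fix d assume "d \<in> E2"
  then obtain e where e: "e \<in> E1" "d = \<psi> e"
    using \<psi> by (auto simp: bij_betw_def)
  then have "ends1 e \<subseteq> V1"
    using assms(1) by (simp add: mgraph_def)
  with e \<phi> \<psi> ends show "ends1 (inv_into E1 \<psi> d) = inv_into V1 \<phi> ` ends2 d"
    by (simp add: bij_betw_def inv_into_image_cancel)
qed

lemma H_coloring_vertex_map:
  assumes "H_coloring VH EH endsH VG EG endsG f"
  obtains g where "\<And>v. v \<in> VH \<Longrightarrow> g v \<in> VG \<and> f ` incid EH endsH v = incid EG endsG (g v)"
proof -
  have "\<forall>v\<in>VH. \<exists>y. y \<in> VG \<and> f ` incid EH endsH v = incid EG endsG y"
    using assms by (auto simp: H_coloring_def)
  then have "\<exists>g. \<forall>v\<in>VH. g v \<in> VG \<and> f ` incid EH endsH v = incid EG endsG (g v)"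
    by (rule bchoice)
  then show ?thesis
    using that by blast
qed

locale injective_coloring =
  fixes VH :: "'w set" and EH :: "'d set" and endsH :: "'d \<Rightarrow> 'w set"
    and VG :: "'v set" and EG :: "'e set" and endsG :: "'e \<Rightarrow> 'v set"
    and f :: "'d \<Rightarrow> 'e" and g :: "'w \<Rightarrow> 'v"
  assumes H: "mgraph VH EH endsH" and G: "mgraph VG EG endsG"
    and maps_to: "\<forall>e\<in>EH. f e \<in> EG"
    and star: "\<And>v. v \<in> VH \<Longrightarrow> g v \<in> VG \<and> f ` incid EH endsH v = incid EG endsG (g v)"
    and inj_g: "inj_on g VH" and inj_f: "inj_on f EH"
begin

lemma ends_image:
  assumes "e \<in> EH"
  shows "endsG (f e) = g ` endsH e"
proof -
  obtain u v where uv: "endsH e = {u, v}" "u \<noteq> v"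
    using H assms by (auto simp: mgraph_def card_2_iff)
  then have "u \<in> VH" "v \<in> VH"
    using H assms by (auto simp: mgraph_def)
  moreover have "e \<in> incid EH endsH u" "e \<in> incid EH endsH v"
    using assms uv by (auto simp: incid_def)
  ultimately have "g u \<in> endsG (f e)" "g v \<in> endsG (f e)"
    using star by (auto simp: incid_def)
  moreover have "g u \<noteq> g v"
    using inj_g uv \<open>u \<in> VH\<close> \<open>v \<in> VH\<close> by (auto simp: inj_on_def)
  moreover have "card (endsG (f e)) = 2"
    using G maps_to assms by (simp add: mgraph_def)
  ultimately show ?thesis
    using uv by (simp add: card_2_eq_doubleton)
qed

lemma vertex_map_surj:
  assumes "connected_graph VG EG endsG" and "VH \<noteq> {}"
  shows "g ` VH = VG"
proof
  show "g ` VH \<subseteq> VG"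
    using star by auto
  have closed: "z \<in> g ` VH" if w: "w \<in> g ` VH" and wz: "(w, z) \<in> adj_rel EG endsG" for w z
  proof -
    obtain u where u: "u \<in> VH" "w = g u"
      using w by auto
    obtain d where d: "d \<in> EG" "endsG d = {w, z}"
      using wz by (auto simp: adj_rel_def)
    then have "d \<in> f ` incid EH endsH u"
      using star u by (auto simp: incid_def)
    then obtain e where e: "e \<in> EH" "d = f e"
      by (auto simp: incid_def)
    moreover have "endsH e \<subseteq> VH"
      using H e(1) by (simp add: mgraph_def)
    ultimately have "endsG d \<subseteq> g ` VH"
      using ends_image by auto
    with d show ?thesis by auto
  qed
  obtain u where "u \<in> VH"
    using assms(2) by auto
  show "VG \<subseteq> g ` VH"
  proof
    fix y assume "y \<in> VG"
    then have "(g u, y) \<in> (adj_rel EG endsG)\<^sup>*"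
      using assms(1) star \<open>u \<in> VH\<close> by (simp add: connected_graph_def)
    then show "y \<in> g ` VH"
      by (induction rule: rtrancl_induct) (use \<open>u \<in> VH\<close> closed in auto)
  qed
qed

lemma edge_map_surj:
  assumes "g ` VH = VG"
  shows "f ` EH = EG"
proof
  show "f ` EH \<subseteq> EG"
    using maps_to by auto
  show "EG \<subseteq> f ` EH"
  proof
    fix d assume "d \<in> EG"
    then obtain w where "w \<in> endsG d" "w \<in> VG"
      using G by (force simp: mgraph_def card_2_iff)
    then obtain u where "u \<in> VH" "d \<in> incid EG endsG (g u)"
      using assms \<open>d \<in> EG\<close> by (auto simp: incid_def)
    then show "d \<in> f ` EH"
      using star by (auto simp: incid_def)
  qed
qed

lemma graph_iso_if_connected:
  assumes "connected_graph VG EG endsG" and "VH \<noteq> {}"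
  shows "graph_iso VG EG endsG VH EH endsH"
proof (rule graph_iso_inverse[OF H])
  have "g ` VH = VG"
    using vertex_map_surj[OF assms] .
  moreover from this have "f ` EH = EG"
    by (rule edge_map_surj)
  ultimately show "bij_betw g VH VG" "bij_betw f EH EG"
    using inj_g inj_f by (simp_all add: bij_betw_def)
  show "\<forall>e\<in>EH. endsG (f e) = g ` endsH e"
    using ends_image by blast
qed

end

text \<open>An explicit labelling of \<open>P\<close>, on which injectivity becomes a finite check.\<close>

definition petersen_vertex :: "nat \<Rightarrow> nat set" where
  "petersen_vertex i = [{0,1}, {0,2}, {0,3}, {0,4}, {1,2}, {1,3}, {1,4}, {2,3}, {2,4}, {3,4}] ! i"

definition petersen_edge_ends :: "nat \<Rightarrow> nat \<times> nat" where
  "petersen_edge_ends k = [(0,7), (0,8), (0,9), (1,5), (1,6), (1,9), (2,4), (2,6), (2,8),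
     (3,4), (3,5), (3,7), (4,9), (5,8), (6,7)] ! k"

definition petersen_edge :: "nat \<Rightarrow> nat set set" where
  "petersen_edge k =
     {petersen_vertex (fst (petersen_edge_ends k)), petersen_vertex (snd (petersen_edge_ends k))}"

definition petersen_star :: "nat \<Rightarrow> nat list" where
  "petersen_star i = [k \<leftarrow> [0..<15]. i = fst (petersen_edge_ends k) \<or> i = snd (petersen_edge_ends k)]"

lemma lessThan_10: "{..<10::nat} = {0, 1, 2, 3, 4, 5, 6, 7, 8, 9}"
  by (simp add: lessThan_atLeast0 atLeastLessThan_upt eval_nat_numeral)

lemma lessThan_15: "{..<15::nat} = {0, 1, 2, 3, 4, 5, 6, 7, 8, 9, 10, 11, 12, 13, 14}"
  by (simp add: lessThan_atLeast0 atLeastLessThan_upt eval_nat_numeral)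

lemma petersen_vertex_image_eq:
  "petersen_vertex ` {..<10} = {{0,1}, {0,2}, {0,3}, {0,4}, {1,2}, {1,3}, {1,4}, {2,3}, {2,4}, {3,4}}"
  by (simp add: lessThan_10 petersen_vertex_def)

lemma petersen_vertex_image: "petersen_vertex ` {..<10} = petersen_V"
proof
  show "petersen_vertex ` {..<10} \<subseteq> petersen_V"
    by (simp add: petersen_vertex_image_eq petersen_V_def)
  show "petersen_V \<subseteq> petersen_vertex ` {..<10}"
  proof
    fix S assume "S \<in> petersen_V"
    then obtain x y where S: "S = {x, y}" "x \<noteq> y" "x < 5" "y < 5"
      unfolding petersen_V_def card_2_iff by auto
    then have "x = 0 \<or> x = 1 \<or> x = 2 \<or> x = 3 \<or> x = 4" "y = 0 \<or> y = 1 \<or> y = 2 \<or> y = 3 \<or> y = 4"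
      by auto
    with S show "S \<in> petersen_vertex ` {..<10}"
      unfolding petersen_vertex_image_eq by (elim disjE; simp add: insert_commute)
  qed
qed

lemma inj_on_petersen_vertex: "inj_on petersen_vertex {..<10}"
  unfolding inj_on_def lessThan_10 by (simp add: petersen_vertex_def doubleton_eq_iff)

lemma petersen_edge_ends_valid:
  "\<forall>k\<in>{..<15}. fst (petersen_edge_ends k) < 10 \<and> snd (petersen_edge_ends k) < 10 \<and>
     petersen_vertex (fst (petersen_edge_ends k)) \<inter> petersen_vertex (snd (petersen_edge_ends k)) = {}"
  unfolding lessThan_15 ball_simps by (simp add: petersen_edge_ends_def petersen_vertex_def)

lemma petersen_edge_ends_complete:
  "\<forall>i\<in>{..<10}. \<forall>j\<in>{..<10}. petersen_vertex i \<inter> petersen_vertex j = {} \<longrightarrow>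
     (\<exists>k\<in>{..<15}. {i, j} = {fst (petersen_edge_ends k), snd (petersen_edge_ends k)})"
  unfolding lessThan_10 lessThan_15 ball_simps bex_simps
  by (simp add: petersen_edge_ends_def petersen_vertex_def doubleton_eq_iff)

lemma petersen_edge_image: "petersen_edge ` {..<15} = petersen_E"
proof
  show "petersen_edge ` {..<15} \<subseteq> petersen_E"
    using petersen_edge_ends_valid petersen_vertex_image
    unfolding petersen_E_def petersen_edge_def by fastforce
  show "petersen_E \<subseteq> petersen_edge ` {..<15}"
  proof
    fix e assume "e \<in> petersen_E"
    then obtain i j where ij: "e = {petersen_vertex i, petersen_vertex j}" "i < 10" "j < 10"
        "petersen_vertex i \<inter> petersen_vertex j = {}"
      unfolding petersen_E_def petersen_vertex_image[symmetric] by blast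
    then obtain k where "k < 15" "{i, j} = {fst (petersen_edge_ends k), snd (petersen_edge_ends k)}"
      using petersen_edge_ends_complete by blast
    with ij(1) show "e \<in> petersen_edge ` {..<15}"
      unfolding petersen_edge_def by (auto simp: doubleton_eq_iff)
  qed
qed

lemma incid_petersen_vertex:
  assumes "i < 10"
  shows "incid petersen_E petersen_ends (petersen_vertex i) = petersen_edge ` set (petersen_star i)"
proof -
  have "petersen_vertex i \<in> petersen_edge k \<longleftrightarrow> k \<in> set (petersen_star i)" if "k < 15" for k
    using petersen_edge_ends_valid inj_on_petersen_vertex assms that
    unfolding petersen_edge_def petersen_star_def inj_on_def by auto
  then show ?thesis
    unfolding incid_def petersen_ends_def petersen_edge_image[symmetric]
    by (auto simp: petersen_star_def)
qed

lemma mgraph_petersen: "mgraph petersen_V petersen_E petersen_ends"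
  unfolding mgraph_def
proof (intro conjI ballI)
  show "finite petersen_V" "finite petersen_E"
    by (simp_all flip: petersen_vertex_image petersen_edge_image)
  fix e assume "e \<in> petersen_E"
  then obtain a b where ab: "e = {a, b}" "a \<in> petersen_V" "b \<in> petersen_V" "a \<inter> b = {}"
    by (auto simp: petersen_E_def)
  then have "a \<noteq> {}"
    by (force simp: petersen_V_def)
  with ab have "a \<noteq> b"
    by auto
  with ab show "petersen_ends e \<subseteq> petersen_V" "card (petersen_ends e) = 2"
    by (simp_all add: petersen_ends_def)
qed

lemma petersen_star_eqs:
  "petersen_star 0 = [0,1,2]"   "petersen_star 1 = [3,4,5]"   "petersen_star 2 = [6,7,8]"
  "petersen_star 3 = [9,10,11]" "petersen_star 4 = [6,9,12]"  "petersen_star 5 = [3,10,13]"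
  "petersen_star 6 = [4,7,14]"  "petersen_star 7 = [0,11,14]" "petersen_star 8 = [1,8,13]"
  "petersen_star 9 = [2,5,12]"
  by (simp_all add: petersen_star_def petersen_edge_ends_def eval_nat_numeral)

lemma length_petersen_star:
  assumes "i < 10"
  shows "length (petersen_star i) = 3"
proof -
  have "\<forall>i\<in>{..<10}. length (petersen_star i) = 3"
    unfolding lessThan_10 ball_simps petersen_star_eqs by simp
  with assms show ?thesis
    by simp
qed

lemma petersen_index_coloring_injective:
  fixes g :: "nat \<Rightarrow> 'v" and f :: "nat \<Rightarrow> 'e"
  assumes "simple V E ends"
    and star: "\<And>i. i < 10 \<Longrightarrow> incid E ends (g i) = f ` set (petersen_star i)"
    and distinct: "\<And>i. i < 10 \<Longrightarrow> distinct (map f (petersen_star i))"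
  shows "inj_on g {..<10} \<and> inj_on f {..<15}"
proof -
  \<comment> \<open>Only these two incidence properties of a simple graph and the ten stars enter the check.\<close>
  define I where "I y d \<longleftrightarrow> d \<in> E \<and> y \<in> ends d" for y d
  have ends: "inj_on ends E" "\<And>d. d \<in> E \<Longrightarrow> card (ends d) = 2"
    using assms(1) unfolding simple_def mgraph_def by auto
  have one_edge: "\<forall>y y' d d'. I y d \<and> I y' d \<and> I y d' \<and> I y' d' \<and> d \<noteq> d' \<longrightarrow> y = y'"
    using ends unfolding I_def inj_on_def card_2_iff
    by (metis insert_absorb2 insert_commute insert_iff singletonD)
  have two_ends: "\<forall>y1 y2 y3 d. I y1 d \<and> I y2 d \<and> I y3 d \<longrightarrow> y1 = y2 \<or> y1 = y3 \<or> y2 = y3"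
    using ends unfolding I_def card_2_iff by fastforce
  have "\<forall>i\<in>{..<10}. (\<forall>d. I (g i) d \<longleftrightarrow> d \<in> set (map f (petersen_star i))) \<and>
      distinct (map f (petersen_star i))"
    using star distinct unfolding I_def incid_def set_eq_iff by auto
  note stars = this[unfolded lessThan_10 ball_simps petersen_star_eqs, simplified]
  have upt: "[0..<10] = [0::nat, 1, 2, 3, 4, 5, 6, 7, 8, 9]"
    "[0..<15] = [0::nat, 1, 2, 3, 4, 5, 6, 7, 8, 9, 10, 11, 12, 13, 14]"
    by (simp_all add: upt_rec)
  have "distinct (map g [0..<10]) \<and> distinct (map f [0..<15])"
    unfolding upt using stars one_edge two_ends
    by (simp only: list.map distinct.simps list.set insert_iff empty_iff One_nat_def) (smt (z3))
  then show ?thesis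
    by (simp add: distinct_map lessThan_atLeast0)
qed

lemma petersen_coloring_injective:
  assumes "cubic V E ends" and "simple V E ends"
    and star: "\<And>v. v \<in> petersen_V \<Longrightarrow>
      g v \<in> V \<and> f ` incid petersen_E petersen_ends v = incid E ends (g v)"
  shows "inj_on g petersen_V \<and> inj_on f petersen_E"
proof -
  have "inj_on (g \<circ> petersen_vertex) {..<10} \<and> inj_on (f \<circ> petersen_edge) {..<15}"
  proof (rule petersen_index_coloring_injective[OF assms(2)])
    fix i :: nat assume "i < 10"
    then have v: "petersen_vertex i \<in> petersen_V"
      by (auto simp flip: petersen_vertex_image)
    show star_i: "incid E ends ((g \<circ> petersen_vertex) i) = (f \<circ> petersen_edge) ` set (petersen_star i)"
      using star[OF v] incid_petersen_vertex[OF \<open>i < 10\<close>] by (simp add: image_comp)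
    have "card (incid E ends (g (petersen_vertex i))) = 3"
      using assms(1) star[OF v] by (simp add: cubic_def)
    then show "distinct (map (f \<circ> petersen_edge) (petersen_star i))"
      using star_i length_petersen_star[OF \<open>i < 10\<close>] by (intro card_distinct) simp
  qed
  then have "inj_on g (petersen_vertex ` {..<10}) \<and> inj_on f (petersen_edge ` {..<15})"
    by (simp add: inj_on_imageI)
  then show ?thesis
    by (simp only: petersen_vertex_image petersen_edge_image)
qed

theorem theorem5:
  fixes V :: "'v set" and E :: "'e set" and ends :: "'e \<Rightarrow> 'v set"
  assumes "cubic V E ends" and "simple V E ends" and "connected_graph V E ends"
    and "\<exists>f. H_coloring petersen_V petersen_E petersen_ends V E ends f"
  shows "graph_iso V E ends petersen_V petersen_E petersen_ends"
proof -
  obtain f where f: "H_coloring petersen_V petersen_E petersen_ends V E ends f"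
    using assms(4) by blast
  obtain g where star:
    "\<And>v. v \<in> petersen_V \<Longrightarrow> g v \<in> V \<and> f ` incid petersen_E petersen_ends v = incid E ends (g v)"
    using H_coloring_vertex_map[OF f] by blast
  have inj: "inj_on g petersen_V" "inj_on f petersen_E"
    using petersen_coloring_injective[OF assms(1,2) star] by auto
  have "mgraph V E ends"
    using assms(1) by (simp add: cubic_def)
  moreover have "\<forall>e\<in>petersen_E. f e \<in> E"
    using f by (simp add: H_coloring_def)
  ultimately interpret injective_coloring petersen_V petersen_E petersen_ends V E ends f g
    using mgraph_petersen star inj by unfold_locales auto
  have "petersen_V \<noteq> {}"
    by (simp add: lessThan_10 flip: petersen_vertex_image)
  with assms(3) show ?thesis
    by (rule graph_iso_if_connected)
qed

end
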